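(* Let $(p,f)$ be an SCF-RT rationalizable within the class of all RUM-CFs, and let $x,y\in X$. If $(x,y)\in T(R^{rt})$, then every RUM-CF $(u,g,r)$ rationalizing $(p,f)$ satisfies $u(x)\geq u(y)$. If $(x,y)\in T_P(R^{rt})$, then every such model satisfies $u(x)>u(y)$.
   Context: $X$ is a finite set of options; $C=\{(x,y): x,y\in X,\ x\neq y\}$; $D\subseteq C$ is a fixed non-empty set with $(x,y)\in D\Rightarrow (y,x)\in D$. An SCF $p$ assigns to each $(x,y)\in D$ a number $p(x,y)>0$ with $p(x,y)+p(y,x)=1$. An SCF-RT is a pair $(p,f)$ where $p$ is an SCF and $f$ assigns to each $(x,y)\in D$ a strictly positive density $f(x,y)$ on $\mathbb{R}^+$ with cdf $F(x,y)$. A RUM is a pair $(u,g)$ with $u:X\to\mathbb{R}$ and $g$ assigning to each $(x,y)\in C$ a density $g(x,y)$ on $\mathbb{R}$ (cdf $G(x,y)$) with $\int v\,g(x,y)(v)\,dv=u(x)-u(y)$, $g(x,y)(v)=g(y,x)(-v)$ for all $v$, and connected support. A RUM-CF is $(u,g,r)$ with $(u,g)$ a RUM and $r:\mathbb{R}^{++}\to\mathbb{R}^+$ continuous, strictly decreasing where $r(v)>0$, $\lim_{v\to0}r(v)=\infty$, $\lim_{v\to\infty}r(v)=0$; $r^{-1}(t)$ ($t>0$) is the inverse of $r$ restricted to $\{r>0\}$. It rationalizes $(p,f)$ if for all $(x,y)\in D$: $G(x,y)(0)=p(y,x)$ and $\frac{1-G(x,y)(r^{-1}(t))}{1-G(x,y)(0)}=F(x,y)(t)$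 for all $t>0$. For cdfs $G,H$ on $\mathbb{R}^+$ and $q>0$, $G$ $q$-FSD $H$ means $G(t)\leq qH(t)$ for all $t\geq0$. The binary relation $R^{rt}$ on $X$: $(x,y)\in R^{rt}$ iff either $x=y$, or $(x,y)\in D$ and $F(y,x)$ $q$-FSD $F(x,y)$ with $q=p(x,y)/p(y,x)$. For a binary relation $R$ on $X$, $T(R)$ is its transitive closure ($(x,y)\in T(R)$ iff there is a sequence $x_1=x,x_2,\dots,x_n=y$, $n\geq2$, with $(x_k,x_{k+1})\in R$ for all $k$), and $T_P(R)$ is the asymmetric part of $T(R)$: $(x,y)\in T_P(R)$ iff $(x,y)\in T(R)$ and $(y,x)\notin T(R)$. *)

theory Defs
  imports "HOL-Analysis.Analysis"
begin

definition pairsC :: "'a set \<Rightarrow> ('a \<times> 'a) set" where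
  "pairsC X = {(x, y). x \<in> X \<and> y \<in> X \<and> x \<noteq> y}"

definition domain_ok :: "'a set \<Rightarrow> ('a \<times> 'a) set \<Rightarrow> bool" where
  "domain_ok X D \<longleftrightarrow> finite X \<and> D \<subseteq> pairsC X \<and> D \<noteq> {} \<and>
     (\<forall>x y. (x, y) \<in> D \<longrightarrow> (y, x) \<in> D)"

definition pos_density_Rplus :: "(real \<Rightarrow> real) \<Rightarrow> bool" where
  "pos_density_Rplus h \<longleftrightarrow> h \<in> borel_measurable borel \<and> (\<forall>t\<ge>0. h t > 0) \<and>
     (\<integral>\<^sup>+ t. ennreal (h t) * indicator {0..} t \<partial>lborel) = 1"

definition cdf_Rplus :: "(real \<Rightarrow> real) \<Rightarrow> real \<Rightarrow> real" where
  "cdf_Rplus h t = (LINT s:{0..t}|lborel. h s)"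

definition density_R :: "(real \<Rightarrow> real) \<Rightarrow> bool" where
  "density_R h \<longleftrightarrow> h \<in> borel_measurable borel \<and> (\<forall>v. h v \<ge> 0) \<and>
     (\<integral>\<^sup>+ v. ennreal (h v) \<partial>lborel) = 1"

definition cdf_R :: "(real \<Rightarrow> real) \<Rightarrow> real \<Rightarrow> real" where
  "cdf_R h v = (LINT s:{..v}|lborel. h s)"

definition SCF :: "('a \<times> 'a) set \<Rightarrow> ('a \<Rightarrow> 'a \<Rightarrow> real) \<Rightarrow> bool" where
  "SCF D p \<longleftrightarrow> (\<forall>(x, y) \<in> D. p x y > 0 \<and> p x y + p y x = 1)"

definition SCF_RT :: "('a \<times> 'a) set \<Rightarrow> ('a \<Rightarrow> 'a \<Rightarrow> real)
    \<Rightarrow> ('a \<Rightarrow> 'a \<Rightarrow> real \<Rightarrow> real) \<Rightarrow> bool" where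
  "SCF_RT D p f \<longleftrightarrow> SCF D p \<and> (\<forall>(x, y) \<in> D. pos_density_Rplus (f x y))"

text \<open>RUM (u, g); the support of g(x,y) is read as the set where the density is positive.\<close>
definition RUM :: "'a set \<Rightarrow> ('a \<Rightarrow> real) \<Rightarrow> ('a \<Rightarrow> 'a \<Rightarrow> real \<Rightarrow> real) \<Rightarrow> bool" where
  "RUM X u g \<longleftrightarrow> (\<forall>(x, y) \<in> pairsC X.
      density_R (g x y) \<and>
      has_bochner_integral lborel (\<lambda>v. v * g x y v) (u x - u y) \<and>
      (\<forall>v. g x y v = g y x (- v)) \<and>
      connected {v. g x y v > 0})"

definition choice_fn :: "(real \<Rightarrow> real) \<Rightarrow> bool" where
  "choice_fn r \<longleftrightarrow> (\<forall>v>0. r v \<ge> 0) \<and> continuous_on {0<..} r \<and>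
     (\<forall>a b. 0 < a \<and> a < b \<and> r a > 0 \<longrightarrow> r b < r a) \<and>
     filterlim r at_top (at_right 0) \<and> (r \<longlongrightarrow> 0) at_top"

text \<open>Inverse of r restricted to {v > 0. r v > 0}, used for t > 0.\<close>
definition rinv :: "(real \<Rightarrow> real) \<Rightarrow> real \<Rightarrow> real" where
  "rinv r t = (THE v. v > 0 \<and> r v > 0 \<and> r v = t)"

definition RUM_CF :: "'a set \<Rightarrow> ('a \<Rightarrow> real) \<Rightarrow> ('a \<Rightarrow> 'a \<Rightarrow> real \<Rightarrow> real)
    \<Rightarrow> (real \<Rightarrow> real) \<Rightarrow> bool" where
  "RUM_CF X u g r \<longleftrightarrow> RUM X u g \<and> choice_fn r"

definition rationalizes :: "('a \<times> 'a) set \<Rightarrow> ('a \<Rightarrow> 'a \<Rightarrow> real) \<Rightarrow> ('a \<Rightarrow> 'a \<Rightarrow> real \<Rightarrow> real)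
    \<Rightarrow> ('a \<Rightarrow> real) \<Rightarrow> ('a \<Rightarrow> 'a \<Rightarrow> real \<Rightarrow> real) \<Rightarrow> (real \<Rightarrow> real) \<Rightarrow> bool" where
  "rationalizes D p f u g r \<longleftrightarrow> (\<forall>(x, y) \<in> D.
      cdf_R (g x y) 0 = p y x \<and>
      (\<forall>t>0. (1 - cdf_R (g x y) (rinv r t)) / (1 - cdf_R (g x y) 0) = cdf_Rplus (f x y) t))"

definition rationalizable_RUM_CF :: "'a set \<Rightarrow> ('a \<times> 'a) set \<Rightarrow> ('a \<Rightarrow> 'a \<Rightarrow> real)
    \<Rightarrow> ('a \<Rightarrow> 'a \<Rightarrow> real \<Rightarrow> real) \<Rightarrow> bool" where
  "rationalizable_RUM_CF X D p f \<longleftrightarrow>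
     (\<exists>u g r. RUM_CF X u g r \<and> rationalizes D p f u g r)"

definition qFSD :: "real \<Rightarrow> (real \<Rightarrow> real) \<Rightarrow> (real \<Rightarrow> real) \<Rightarrow> bool" where
  "qFSD q G H \<longleftrightarrow> (\<forall>t\<ge>0. G t \<le> q * H t)"

definition Rrt :: "'a set \<Rightarrow> ('a \<times> 'a) set \<Rightarrow> ('a \<Rightarrow> 'a \<Rightarrow> real)
    \<Rightarrow> ('a \<Rightarrow> 'a \<Rightarrow> real \<Rightarrow> real) \<Rightarrow> ('a \<times> 'a) set" where
  "Rrt X D p f = {(x, y). x \<in> X \<and> y \<in> X \<and>
     (x = y \<or> ((x, y) \<in> D \<and>
        qFSD (p x y / p y x) (cdf_Rplus (f y x)) (cdf_Rplus (f x y))))}"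

definition TP :: "('a \<times> 'a) set \<Rightarrow> ('a \<times> 'a) set" where
  "TP R = {(x, y). (x, y) \<in> trancl R \<and> (y, x) \<notin> trancl R}"

end

theory Submission
  imports Defs "HOL-Probability.Probability_Mass_Function"
begin

text \<open>For \<open>(a, b) \<in> D\<close>, the rationalization identity
  \<open>1 - G(a,b)(r\<inverse>(t)) = p(a,b) F(a,b)(t)\<close> turns the \<open>q\<close>-FSD condition defining \<open>R\<^sup>r\<^sup>t\<close> into
  \<open>G(a,b) \<le> G(b,a)\<close> on the positive half-line (where \<open>r\<close> vanishes, both cdfs are already \<open>1\<close>).
  By the layer-cake formula and the symmetry \<open>g(a,b)(v) = g(b,a)(-v)\<close>, the mean utility difference
  \<open>u(a) - u(b)\<close> equals \<open>\<integral>\<^sub>0\<^sup>\<infinity> (G(b,a)(s) - G(a,b)(s)) ds\<close>. Hence every \<open>R\<^sup>r\<^sup>t\<close> step weakly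
  decreases utility, and it keeps utility constant only if the continuous integrand vanishes, that is,
  only if the reverse step is in \<open>R\<^sup>r\<^sup>t\<close> as well. Both facts propagate along chains of \<open>T(R\<^sup>r\<^sup>t)\<close>.\<close>

section \<open>Choice functions\<close>

lemma choice_fn_pos_downward_closed:
  assumes r: "choice_fn r" and a: "0 < a" "a \<le> b" and b: "0 < r b"
  shows "0 < r a"
proof (rule ccontr)
  assume "\<not> 0 < r a"
  then have ra: "r a = 0"
    using r a unfolding choice_fn_def by force
  then have "a < b"
    using a b by (cases "a = b") auto
  moreover have "continuous_on {a..b} r"
    using r a unfolding choice_fn_def by (auto elim: continuous_on_subset)
  ultimately obtain c where c: "a \<le> c" "c \<le> b" "r c = r b / 2"
    using IVT'[of r a "r b / 2" b] ra b by auto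
  then have "c < b" "0 < c" "0 < r c"
    using a b by (auto simp: order.order_iff_strict)
  then have "r b < r c"
    using r unfolding choice_fn_def by blast
  then show False
    using c b by simp
qed

lemma choice_fn_inj_on: "choice_fn r \<Longrightarrow> inj_on r {v. 0 < v \<and> 0 < r v}"
  unfolding choice_fn_def inj_on_def by (metis linorder_neqE_linordered_idom mem_Collect_eq order.irrefl)

lemma rinv_eq:
  assumes "choice_fn r" "0 < s" "0 < r s"
  shows "rinv r (r s) = s"
  unfolding rinv_def
  by (rule the_equality) (use assms choice_fn_inj_on[OF assms(1)] in \<open>auto simp: inj_on_def\<close>)

lemma choice_fn_surj:
  assumes r: "choice_fn r" and t: "0 < t"
  shows "\<exists>s>0. r s = t"
proof -
  have "eventually (\<lambda>s. t < r s) (at_right 0)"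
    using r unfolding choice_fn_def filterlim_at_top_dense by blast
  then obtain b where b: "0 < b" "\<And>s. 0 < s \<Longrightarrow> s < b \<Longrightarrow> t < r s"
    unfolding eventually_at_right_field by auto
  have "eventually (\<lambda>s. r s < t) at_top"
    using r t unfolding choice_fn_def by (auto simp: order_tendsto_iff)
  then obtain N where N: "\<And>s. N \<le> s \<Longrightarrow> r s < t"
    unfolding eventually_at_top_linorder by auto
  define a c where "a = b / 2" and "c = max N (a + 1)"
  have "0 < a" "t < r a"
    using b by (auto simp: a_def)
  moreover have "a < c" "r c < t"
    using N by (auto simp: c_def)
  moreover have "continuous_on {a..c} r"
    using r \<open>0 < a\<close> unfolding choice_fn_def by (auto elim: continuous_on_subset)
  ultimately obtain s where "a \<le> s" "r s = t"
    using IVT2'[of r c t a] by auto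
  then show ?thesis
    using \<open>0 < a\<close> by (intro exI[of _ s]) auto
qed

lemma r_rinv:
  assumes "choice_fn r" "0 < t"
  shows "r (rinv r t) = t" and "0 < rinv r t"
  using choice_fn_surj[OF assms] rinv_eq[OF assms(1)] assms(2) by auto

section \<open>Densities on the real line\<close>

lemma density_R_set_integrable:
  assumes "density_R h" "A \<in> sets borel"
  shows "set_integrable lborel A h"
proof -
  have "integrable lborel h"
    using assms(1) unfolding density_R_def by (intro integrableI_nonneg) auto
  then show ?thesis
    unfolding set_integrable_def using assms(2) by (intro integrable_mult_indicator) auto
qed

lemma density_R_reflect:
  assumes "density_R h"
  shows "density_R (\<lambda>v. h (- v))"
  using assms nn_integral_real_affine[of "\<lambda>v. ennreal (h v)" "-1" 0]
  unfolding density_R_def by auto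

lemma one_minus_cdf_R:
  assumes h: "density_R h"
  shows "1 - cdf_R h s = (LINT v:{s<..}|lborel. h v)"
proof -
  have "(LINT v:({..s} \<union> {s<..})|lborel. h v) = cdf_R h s + (LINT v:{s<..}|lborel. h v)"
    unfolding cdf_R_def by (rule set_integral_Un) (auto intro: density_R_set_integrable[OF h])
  moreover have "{..s} \<union> {s<..} = UNIV"
    by auto
  then have "(LINT v:({..s} \<union> {s<..})|lborel. h v) = 1"
    using h unfolding density_R_def set_lebesgue_integral_def
    by (simp add: integral_eq_nn_integral)
  ultimately show ?thesis
    by simp
qed

lemma cdf_R_mono:
  assumes h: "density_R h" and "s \<le> s'"
  shows "cdf_R h s \<le> cdf_R h s'"
proof -
  have "0 \<le> h v" for v
    using h by (simp add: density_R_def)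
  then show ?thesis
    unfolding cdf_R_def set_lebesgue_integral_def
    using density_R_set_integrable[OF h, of "{..s}"] density_R_set_integrable[OF h, of "{..s'}"]
      \<open>s \<le> s'\<close>
    by (intro integral_mono) (auto simp: set_integrable_def split: split_indicator)
qed

lemma cdf_R_le_1:
  assumes h: "density_R h"
  shows "cdf_R h s \<le> 1"
proof -
  have "0 \<le> (LINT v:{s<..}|lborel. h v)"
    using h unfolding density_R_def set_lebesgue_integral_def by (simp add: integral_nonneg_AE)
  then show ?thesis
    using one_minus_cdf_R[OF h, of s] by linarith
qed

lemma isCont_cdf_R:
  assumes h: "density_R h"
  shows "isCont (cdf_R h) x"
proof -
  define a where "a = x - 1"
  have split: "cdf_R h s = (LINT v:{..<a}|lborel. h v) + (LBINT v:{a..s}. h v)" if "a < s" for s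
  proof -
    have "{..s} = {..<a} \<union> {a..s}"
      using that by auto
    then have "cdf_R h s = (LINT v:({..<a} \<union> {a..s})|lborel. h v)"
      unfolding cdf_R_def by simp
    also have "\<dots> = (LINT v:{..<a}|lborel. h v) + (LBINT v:{a..s}. h v)"
      by (rule set_integral_Un) (auto intro: density_R_set_integrable[OF h])
    finally show ?thesis .
  qed
  have "continuous_on {a<..} (\<lambda>s. (LINT v:{..<a}|lborel. h v) + (LBINT v:{a..s}. h v))"
    by (intro continuous_intros continuous_on_subset[OF continuous_on_LBINT])
      (auto intro: density_R_set_integrable[OF h])
  then have "continuous_on {a<..} (cdf_R h)"
    using split by (subst continuous_on_cong[OF refl]) auto
  then show ?thesis
    using continuous_on_eq_continuous_at[of "{a<..}" "cdf_R h"] by (auto simp: a_def)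
qed

lemma cdf_Rplus_0: "cdf_Rplus h 0 = 0"
  unfolding cdf_Rplus_def set_lebesgue_integral_def
  by (rule integral_eq_zero_AE, rule eventually_mono[OF AE_lborel_singleton[of 0]]) simp

lemma cdf_Rplus_tendsto_0:
  assumes "pos_density_Rplus h"
  shows "(cdf_Rplus h \<longlongrightarrow> 0) (at_right 0)"
proof -
  have [measurable]: "h \<in> borel_measurable borel" and pos: "\<And>t. 0 \<le> t \<Longrightarrow> 0 < h t"
    and mass: "(\<integral>\<^sup>+t. ennreal (h t) * indicator {0..} t \<partial>lborel) = 1"
    using assms unfolding pos_density_Rplus_def by auto
  have "(\<integral>\<^sup>+t. ennreal (indicator {0..} t * h t) \<partial>lborel) = 1"
    using mass by (subst nn_integral_cong[where v = "\<lambda>t. ennreal (h t) * indicator {0..} t"])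
      (auto split: split_indicator)
  then have "set_integrable lborel {0..} h"
    unfolding set_integrable_def using pos
    by (intro integrableI_nonneg) (auto split: split_indicator intro: less_imp_le)
  then have "continuous_on UNIV (cdf_Rplus h)"
    unfolding cdf_Rplus_def[abs_def]
    by (auto intro!: continuous_on_LBINT elim: set_integrable_subset)
  then have "(cdf_Rplus h \<longlongrightarrow> cdf_Rplus h 0) (at_right 0)"
    by (simp add: continuous_on_eq_continuous_at isCont_def filterlim_at_split)
  then show ?thesis
    by (simp add: cdf_Rplus_0)
qed

lemma nn_integral_tail_cdf_R:
  assumes h: "density_R h"
  shows "(\<integral>\<^sup>+s. ennreal (indicator {0<..} s * (1 - cdf_R h s)) \<partial>lborel)
       = (\<integral>\<^sup>+v. ennreal (indicator {0<..} v * (v * h v)) \<partial>lborel)"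
proof -
  have [measurable]: "h \<in> borel_measurable borel" and nonneg: "\<And>v. 0 \<le> h v"
    using h by (auto simp: density_R_def)
  define F where "F s v = (if 0 < s \<and> s < v then ennreal (h v) else 0)" for s v
  have tail: "ennreal (indicator {0<..} s * (1 - cdf_R h s)) = (\<integral>\<^sup>+v. F s v \<partial>lborel)" for s
  proof (cases "0 < s")
    case True
    have "(\<integral>\<^sup>+v. F s v \<partial>lborel) = (\<integral>\<^sup>+v. ennreal (indicator {s<..} v * h v) \<partial>lborel)"
      using True by (intro nn_integral_cong) (auto simp: F_def split: split_indicator)
    also have "\<dots> = ennreal (LINT v:{s<..}|lborel. h v)"
      using density_R_set_integrable[OF h, of "{s<..}"] nonneg
      by (subst nn_integral_eq_integral)
        (auto simp: set_integrable_def set_lebesgue_integral_def split: split_indicator)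
    finally show ?thesis
      using True by (simp add: one_minus_cdf_R[OF h])
  qed (simp add: F_def)
  have mass: "ennreal (indicator {0<..} v * (v * h v)) = (\<integral>\<^sup>+s. F s v \<partial>lborel)" for v
  proof (cases "0 < v")
    case True
    have "(\<integral>\<^sup>+s. F s v \<partial>lborel) = (\<integral>\<^sup>+s. ennreal (h v) * indicator {0<..<v} s \<partial>lborel)"
      by (intro nn_integral_cong) (auto simp: F_def split: split_indicator)
    also have "\<dots> = ennreal (h v) * ennreal v"
      using True by (subst nn_integral_cmult_indicator) auto
    finally show ?thesis
      using True nonneg by (simp add: ennreal_mult' mult.commute)
  next
    case False
    then have "(\<lambda>s. F s v) = (\<lambda>s. 0)"
      by (auto simp: F_def)
    then show ?thesis
      using False by simp
  qed
  have "(\<lambda>(v, s). F s v) \<in> borel_measurable (lborel \<Otimes>\<^sub>M lborel)"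
    unfolding F_def by measurable
  then have "(\<integral>\<^sup>+s. (\<integral>\<^sup>+v. F s v \<partial>lborel) \<partial>lborel) = (\<integral>\<^sup>+v. (\<integral>\<^sup>+s. F s v \<partial>lborel) \<partial>lborel)"
    by (rule lborel_pair.Fubini')
  then show ?thesis
    by (simp add: tail mass)
qed

lemma layer_cake_density_R:
  assumes h: "density_R h" and m: "integrable lborel (\<lambda>v. v * h v)"
  shows "set_integrable lborel {0<..} (\<lambda>s. 1 - cdf_R h s)"
    and "(LINT v:{0<..}|lborel. v * h v) = (LINT s:{0<..}|lborel. 1 - cdf_R h s)"
proof -
  have nonneg: "0 \<le> indicator {0<..} v * (v * h v)" for v
    using h by (simp add: density_R_def split: split_indicator)
  have tail_nonneg: "0 \<le> indicator {0<..} s * (1 - cdf_R h s)" for s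
    using cdf_R_le_1[OF h, of s] by (simp split: split_indicator)
  have "integrable lborel (\<lambda>v. indicator {0<..} v * (v * h v))"
    using integrable_mult_indicator[OF _ m, of "{0<..}"] by simp
  then have "(\<integral>\<^sup>+v. ennreal (indicator {0<..} v * (v * h v)) \<partial>lborel)
      = ennreal (LINT v:{0<..}|lborel. v * h v)"
    using nonneg by (simp add: nn_integral_eq_integral set_lebesgue_integral_def)
  then have nn: "(\<integral>\<^sup>+s. ennreal (indicator {0<..} s * (1 - cdf_R h s)) \<partial>lborel)
      = ennreal (LINT v:{0<..}|lborel. v * h v)"
    by (simp add: nn_integral_tail_cdf_R[OF h])
  have "cdf_R h \<in> borel_measurable borel"
    by (intro borel_measurable_continuous_onI continuous_at_imp_continuous_on ballI isCont_cdf_R h)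
  then show int: "set_integrable lborel {0<..} (\<lambda>s. 1 - cdf_R h s)"
    unfolding set_integrable_def using tail_nonneg nn
    by (intro integrableI_nonneg) auto
  have "ennreal (LINT s:{0<..}|lborel. 1 - cdf_R h s) = ennreal (LINT v:{0<..}|lborel. v * h v)"
    using int tail_nonneg nn
    by (simp add: nn_integral_eq_integral set_integrable_def set_lebesgue_integral_def)
  moreover have "0 \<le> (LINT v:{0<..}|lborel. v * h v)"
    using nonneg by (simp add: set_lebesgue_integral_def integral_nonneg_AE)
  moreover have "0 \<le> (LINT s:{0<..}|lborel. 1 - cdf_R h s)"
    using tail_nonneg by (simp add: set_lebesgue_integral_def integral_nonneg_AE)
  ultimately show "(LINT v:{0<..}|lborel. v * h v) = (LINT s:{0<..}|lborel. 1 - cdf_R h s)"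
    by simp
qed

lemma mean_eq_integral_cdf_reflect_diff:
  assumes h: "density_R h" and m: "integrable lborel (\<lambda>v. v * h v)"
  shows "set_integrable lborel {0<..} (\<lambda>s. cdf_R (\<lambda>v. h (- v)) s - cdf_R h s)"
    and "(\<integral>v. v * h v \<partial>lborel) = (LINT s:{0<..}|lborel. cdf_R (\<lambda>v. h (- v)) s - cdf_R h s)"
proof -
  define h' where "h' = (\<lambda>v. h (- v))"
  have "integrable lborel (\<lambda>v. - (v * h' v))"
    using lborel_integrable_real_affine_iff[of "-1" "\<lambda>v. v * h v" 0] m by (simp add: h'_def)
  then have m': "integrable lborel (\<lambda>v. v * h' v)"
    using integrable_minus by fastforce
  note L = layer_cake_density_R[OF h m]
    and L' = layer_cake_density_R[OF density_R_reflect[OF h, folded h'_def] m']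
  have "(\<integral>v. v * h v \<partial>lborel)
      = (\<integral>v. indicator {0<..} v * (v * h v) + indicator {..<0} v * (v * h v) \<partial>lborel)"
    by (intro Bochner_Integration.integral_cong) (auto split: split_indicator)
  also have "\<dots> = (LINT v:{0<..}|lborel. v * h v) + (LINT v:{..<0}|lborel. v * h v)"
    using integrable_mult_indicator[OF _ m, of "{0<..}"] integrable_mult_indicator[OF _ m, of "{..<0}"]
    by (simp add: set_lebesgue_integral_def)
  also have "(LINT v:{..<0}|lborel. v * h v) = - (LINT v:{0<..}|lborel. v * h' v)"
    using lborel_integral_real_affine[of "-1" "\<lambda>v. indicator {..<0} v * (v * h v)" 0]
    by (simp add: set_lebesgue_integral_def h'_def indicator_def)
  finally have "(\<integral>v. v * h v \<partial>lborel)
      = (LINT s:{0<..}|lborel. 1 - cdf_R h s) - (LINT s:{0<..}|lborel. 1 - cdf_R h' s)"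
    using L(2) L'(2) by simp
  also have "\<dots> = (LINT s:{0<..}|lborel. (1 - cdf_R h s) - (1 - cdf_R h' s))"
    by (rule set_integral_diff(2)[OF L(1) L'(1), symmetric])
  finally show "(\<integral>v. v * h v \<partial>lborel) = (LINT s:{0<..}|lborel. cdf_R (\<lambda>v. h (- v)) s - cdf_R h s)"
    by (simp add: h'_def)
  have "set_integrable lborel {0<..} (\<lambda>s. (1 - cdf_R h s) - (1 - cdf_R h' s))"
    by (rule set_integral_diff(1)[OF L(1) L'(1)])
  then show "set_integrable lborel {0<..} (\<lambda>s. cdf_R (\<lambda>v. h (- v)) s - cdf_R h s)"
    by (simp add: h'_def)
qed

lemma continuous_nonneg_set_integral_eq_0:
  fixes \<phi> :: "'a::euclidean_space \<Rightarrow> real"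
  assumes cont: "continuous_on UNIV \<phi>" and S: "open S" and int: "set_integrable lborel S \<phi>"
    and zero: "(LINT y:S|lborel. \<phi> y) = 0" and nonneg: "\<And>y. y \<in> S \<Longrightarrow> 0 \<le> \<phi> y"
    and x: "x \<in> S"
  shows "\<phi> x = 0"
proof -
  have "AE y in lborel. indicator S y * \<phi> y = 0"
    using integral_nonneg_eq_0_iff_AE[where M = lborel and f = "\<lambda>y. indicator S y * \<phi> y"] int zero nonneg
    by (auto simp: set_integrable_def set_lebesgue_integral_def split: split_indicator)
  then have "AE y \<in> S in lebesgue. y \<in> \<phi> -` {0}"
    by (intro AE_completion) (auto elim!: eventually_mono)
  moreover have "closed (\<phi> -` {0})"
    using cont by (intro continuous_closed_vimage) (auto simp: continuous_on_eq_continuous_at)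
  ultimately show ?thesis
    using mem_closed_if_AE_lebesgue_open[OF S _ _ x] by blast
qed

section \<open>Chains along which a potential decreases\<close>

lemma trancl_potential_le:
  fixes \<phi> :: "'a \<Rightarrow> 'b::preorder"
  assumes step: "\<And>a b. (a, b) \<in> R \<Longrightarrow> \<phi> b \<le> \<phi> a" and "(a, b) \<in> R\<^sup>+"
  shows "\<phi> b \<le> \<phi> a"
  using assms(2) by (induction rule: trancl_induct) (blast dest: step intro: order_trans)+

lemma trancl_converse_if_potential_le:
  fixes \<phi> :: "'a \<Rightarrow> 'b::order"
  assumes le: "\<And>a b. (a, b) \<in> R \<Longrightarrow> \<phi> b \<le> \<phi> a"
    and level: "\<And>a b. (a, b) \<in> R \<Longrightarrow> \<phi> a = \<phi> b \<Longrightarrow> (b, a) \<in> R"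
    and "(a, b) \<in> R\<^sup>+" "\<phi> a \<le> \<phi> b"
  shows "(b, a) \<in> R\<^sup>+"
  using assms(3,4)
proof (induction rule: trancl_induct)
  case (base b)
  then show ?case
    using le level by (metis order.antisym r_into_trancl')
next
  case (step b c)
  have "\<phi> b \<le> \<phi> a" "\<phi> c \<le> \<phi> b"
    using trancl_potential_le[of R \<phi>] le step.hyps by blast+
  then have "\<phi> a = \<phi> b" "\<phi> b = \<phi> c"
    using step.prems by auto
  then have "(b, a) \<in> R\<^sup>+" "(c, b) \<in> R"
    using step.IH level[OF step.hyps(2)] by auto
  then show ?case
    by (blast intro: trancl_into_trancl2)
qed

section \<open>Response times rationalized by a RUM-CF\<close>

locale RUM_CF_rationalization =
  fixes X :: "'a set" and D :: "('a \<times> 'a) set"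
    and p :: "'a \<Rightarrow> 'a \<Rightarrow> real" and f :: "'a \<Rightarrow> 'a \<Rightarrow> real \<Rightarrow> real"
    and u :: "'a \<Rightarrow> real" and g :: "'a \<Rightarrow> 'a \<Rightarrow> real \<Rightarrow> real" and r :: "real \<Rightarrow> real"
  assumes domain_ok: "domain_ok X D" and SCF_RT: "SCF_RT D p f"
    and RUM_CF: "RUM_CF X u g r" and rationalizes: "rationalizes D p f u g r"
begin

lemma choice_fn: "choice_fn r"
  using RUM_CF unfolding RUM_CF_def by simp

lemma D_sym: "(a, b) \<in> D \<Longrightarrow> (b, a) \<in> D"
  using domain_ok unfolding domain_ok_def by blast

lemma D_pairsC: "(a, b) \<in> D \<Longrightarrow> (a, b) \<in> pairsC X"
  using domain_ok unfolding domain_ok_def by blast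

lemma p_pos: "(a, b) \<in> D \<Longrightarrow> 0 < p a b"
  using SCF_RT unfolding SCF_RT_def SCF_def by blast

lemma pos_density_f: "(a, b) \<in> D \<Longrightarrow> pos_density_Rplus (f a b)"
  using SCF_RT unfolding SCF_RT_def by blast

lemma density_g: "(a, b) \<in> pairsC X \<Longrightarrow> density_R (g a b)"
  using RUM_CF unfolding RUM_CF_def RUM_def by blast

lemma one_minus_cdf_R_rinv:
  assumes ab: "(a, b) \<in> D" and t: "0 < t"
  shows "1 - cdf_R (g a b) (rinv r t) = p a b * cdf_Rplus (f a b) t"
proof -
  have "cdf_R (g a b) 0 = p b a"
    and F: "(1 - cdf_R (g a b) (rinv r t)) / (1 - cdf_R (g a b) 0) = cdf_Rplus (f a b) t"
    using rationalizes ab t unfolding rationalizes_def by auto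
  moreover have "p a b + p b a = 1"
    using SCF_RT ab unfolding SCF_RT_def SCF_def by blast
  ultimately have "1 - cdf_R (g a b) 0 = p a b"
    by simp
  then have "1 - cdf_R (g a b) (rinv r t) = cdf_Rplus (f a b) t * p a b"
    using F p_pos[OF ab] by (simp add: divide_eq_eq)
  then show ?thesis
    by (simp add: mult.commute)
qed

text \<open>Every response time \<open>t > 0\<close> is \<open>r s'\<close> for some \<open>s' < s\<close>, and the tail of \<open>g a b\<close> beyond \<open>s'\<close> is
  \<open>p a b * cdf_Rplus (f a b) t\<close>, which tends to \<open>0\<close> with \<open>t\<close>.\<close>
lemma cdf_R_eq_1_if_r_eq_0:
  assumes ab: "(a, b) \<in> D" and s: "0 < s" "r s = 0"
  shows "cdf_R (g a b) s = 1"
proof -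
  have density: "density_R (g a b)"
    using density_g[OF D_pairsC[OF ab]] .
  have le: "1 - cdf_R (g a b) s \<le> p a b * cdf_Rplus (f a b) t" if t: "0 < t" for t
  proof -
    have "rinv r t < s"
      using choice_fn_pos_downward_closed[OF choice_fn, of s "rinv r t"] r_rinv[OF choice_fn t] s t
      by (cases "s \<le> rinv r t") auto
    then have "1 - cdf_R (g a b) s \<le> 1 - cdf_R (g a b) (rinv r t)"
      using cdf_R_mono[OF density] by simp
    then show ?thesis
      using one_minus_cdf_R_rinv[OF ab t] by simp
  qed
  have "((\<lambda>t. p a b * cdf_Rplus (f a b) t) \<longlongrightarrow> p a b * 0) (at_right 0)"
    by (intro tendsto_intros cdf_Rplus_tendsto_0 pos_density_f ab)
  then have "1 - cdf_R (g a b) s \<le> 0"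
    using le by (intro tendsto_lowerbound) (auto simp: eventually_at_right_field intro!: exI[of _ 1])
  then show ?thesis
    using cdf_R_le_1[OF density, of s] by simp
qed

lemma qFSD_iff_cdf_R_le:
  assumes ab: "(a, b) \<in> D"
  shows "qFSD (p a b / p b a) (cdf_Rplus (f b a)) (cdf_Rplus (f a b))
    \<longleftrightarrow> (\<forall>s>0. cdf_R (g a b) s \<le> cdf_R (g b a) s)"
proof -
  have at_rinv: "cdf_Rplus (f b a) t \<le> p a b / p b a * cdf_Rplus (f a b) t
      \<longleftrightarrow> cdf_R (g a b) (rinv r t) \<le> cdf_R (g b a) (rinv r t)" if "0 < t" for t
    using one_minus_cdf_R_rinv[OF ab that] one_minus_cdf_R_rinv[OF D_sym[OF ab] that]
      p_pos[OF ab] p_pos[OF D_sym[OF ab]]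
    by (auto simp: field_simps)
  show ?thesis
  proof
    assume q: "qFSD (p a b / p b a) (cdf_Rplus (f b a)) (cdf_Rplus (f a b))"
    show "\<forall>s>0. cdf_R (g a b) s \<le> cdf_R (g b a) s"
    proof (intro allI impI)
      fix s :: real
      assume "0 < s"
      show "cdf_R (g a b) s \<le> cdf_R (g b a) s"
      proof (cases "0 < r s")
        case True
        then show ?thesis
          using q at_rinv[OF True] rinv_eq[OF choice_fn \<open>0 < s\<close> True] unfolding qFSD_def by auto
      next
        case False
        then have "r s = 0"
          using choice_fn \<open>0 < s\<close> unfolding choice_fn_def by force
        then show ?thesis
          using cdf_R_eq_1_if_r_eq_0 ab D_sym \<open>0 < s\<close> by simp
      qed
    qed
  next
    assume "\<forall>s>0. cdf_R (g a b) s \<le> cdf_R (g b a) s"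
    then show "qFSD (p a b / p b a) (cdf_Rplus (f b a)) (cdf_Rplus (f a b))"
      unfolding qFSD_def using at_rinv r_rinv[OF choice_fn]
      by (metis cdf_Rplus_0 mult_zero_right order.refl order.order_iff_strict)
  qed
qed

lemma Rrt_iff:
  "(a, b) \<in> Rrt X D p f \<longleftrightarrow> a \<in> X \<and> b \<in> X \<and>
     (a = b \<or> (a, b) \<in> D \<and> (\<forall>s>0. cdf_R (g a b) s \<le> cdf_R (g b a) s))"
proof -
  have "(a, b) \<in> D \<and> qFSD (p a b / p b a) (cdf_Rplus (f b a)) (cdf_Rplus (f a b))
      \<longleftrightarrow> (a, b) \<in> D \<and> (\<forall>s>0. cdf_R (g a b) s \<le> cdf_R (g b a) s)"
    using qFSD_iff_cdf_R_le by blast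
  then show ?thesis
    unfolding Rrt_def by simp
qed

lemma utility_diff_eq_integral:
  assumes ab: "(a, b) \<in> pairsC X"
  shows "set_integrable lborel {0<..} (\<lambda>s. cdf_R (g b a) s - cdf_R (g a b) s)"
    and "u a - u b = (LINT s:{0<..}|lborel. cdf_R (g b a) s - cdf_R (g a b) s)"
proof -
  have "has_bochner_integral lborel (\<lambda>v. v * g a b v) (u a - u b)"
    and reflect: "\<And>v. g a b v = g b a (- v)"
    using RUM_CF ab unfolding RUM_CF_def RUM_def by auto
  then have "integrable lborel (\<lambda>v. v * g a b v)" "u a - u b = (\<integral>v. v * g a b v \<partial>lborel)"
    by (auto simp: has_bochner_integral_iff)
  moreover have "g b a = (\<lambda>v. g a b (- v))"
    using reflect by simp
  ultimately show "set_integrable lborel {0<..} (\<lambda>s. cdf_R (g b a) s - cdf_R (g a b) s)"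
    and "u a - u b = (LINT s:{0<..}|lborel. cdf_R (g b a) s - cdf_R (g a b) s)"
    using mean_eq_integral_cdf_reflect_diff[OF density_g[OF ab]] by simp_all
qed

lemma Rrt_utility_le:
  assumes "(a, b) \<in> Rrt X D p f"
  shows "u b \<le> u a"
proof (cases "a = b")
  case False
  then have "(a, b) \<in> D" and le: "\<And>s. 0 < s \<Longrightarrow> cdf_R (g a b) s \<le> cdf_R (g b a) s"
    using assms unfolding Rrt_iff by auto
  then have "0 \<le> (LINT s:{0<..}|lborel. cdf_R (g b a) s - cdf_R (g a b) s)"
    unfolding set_lebesgue_integral_def
    by (intro integral_nonneg_AE) (auto split: split_indicator)
  then show ?thesis
    using utility_diff_eq_integral(2)[OF D_pairsC[OF \<open>(a, b) \<in> D\<close>]] by simp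
qed simp

lemma Rrt_converse_if_utility_eq:
  assumes ab: "(a, b) \<in> Rrt X D p f" and eq: "u a = u b"
  shows "(b, a) \<in> Rrt X D p f"
proof (cases "a = b")
  case False
  then have D: "(a, b) \<in> D" and le: "\<And>s. 0 < s \<Longrightarrow> cdf_R (g a b) s \<le> cdf_R (g b a) s"
    using ab unfolding Rrt_iff by auto
  define \<phi> where "\<phi> = (\<lambda>s. cdf_R (g b a) s - cdf_R (g a b) s)"
  have "isCont (cdf_R (g b a)) s" "isCont (cdf_R (g a b)) s" for s
    using isCont_cdf_R density_g[OF D_pairsC[OF D_sym[OF D]]] density_g[OF D_pairsC[OF D]] by auto
  then have cont: "continuous_on UNIV \<phi>"
    unfolding \<phi>_def by (intro continuous_at_imp_continuous_on ballI isCont_diff)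
  note integral = utility_diff_eq_integral[OF D_pairsC[OF D], folded \<phi>_def]
  have "(LINT s:{0<..}|lborel. \<phi> s) = 0"
    using integral(2) eq by simp
  moreover have "\<And>s. s \<in> {0<..} \<Longrightarrow> 0 \<le> \<phi> s"
    using le by (simp add: \<phi>_def)
  ultimately have "\<phi> s = 0" if "s \<in> {0<..}" for s
    using that by (rule continuous_nonneg_set_integral_eq_0[OF cont open_greaterThan integral(1)])
  then have "\<And>s. 0 < s \<Longrightarrow> cdf_R (g b a) s \<le> cdf_R (g a b) s"
    by (simp add: \<phi>_def)
  then show ?thesis
    using ab D_sym[OF D] unfolding Rrt_iff by auto
next
  case True
  then show ?thesis
    using ab by simp
qed

end

theorem corollary2:
  fixes X :: "'a set" and D :: "('a \<times> 'a) set"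
    and p :: "'a \<Rightarrow> 'a \<Rightarrow> real" and f :: "'a \<Rightarrow> 'a \<Rightarrow> real \<Rightarrow> real"
    and x y :: 'a
  assumes "domain_ok X D"
    and "SCF_RT D p f"
    and "rationalizable_RUM_CF X D p f"
    and "x \<in> X" and "y \<in> X"
  shows "((x, y) \<in> trancl (Rrt X D p f) \<longrightarrow>
           (\<forall>u g r. RUM_CF X u g r \<and> rationalizes D p f u g r \<longrightarrow> u x \<ge> u y))
       \<and> ((x, y) \<in> TP (Rrt X D p f) \<longrightarrow>
           (\<forall>u g r. RUM_CF X u g r \<and> rationalizes D p f u g r \<longrightarrow> u x > u y))"
proof (intro conjI impI allI)
  \<comment> \<open>The existence of a rationalizing RUM-CF only keeps the claims from being vacuous.\<close>
  fix u g r
  assume xy: "(x, y) \<in> trancl (Rrt X D p f)" and "RUM_CF X u g r \<and> rationalizes D p f u g r"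
  then interpret RUM_CF_rationalization X D p f u g r
    using assms(1,2) by unfold_locales auto
  show "u y \<le> u x"
    using trancl_potential_le[OF Rrt_utility_le xy] .
next
  fix u g r
  assume xy: "(x, y) \<in> TP (Rrt X D p f)" and "RUM_CF X u g r \<and> rationalizes D p f u g r"
  then interpret RUM_CF_rationalization X D p f u g r
    using assms(1,2) by unfold_locales auto
  have "(x, y) \<in> (Rrt X D p f)\<^sup>+" "(y, x) \<notin> (Rrt X D p f)\<^sup>+"
    using xy unfolding TP_def by auto
  then show "u y < u x"
    using trancl_converse_if_potential_le[OF Rrt_utility_le Rrt_converse_if_utility_eq]
    by (meson not_le)
qed

end
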